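(* For every integer $p\ge1$ and every $s\in\mathbb{C}^k$, $$\nabla A(s)^p-A(s)^p\nabla+pA(s)^{p-1}=(-1)^{k-1}\partial_{s_k}\big(A(s)^p\big)\,P'_s(A(s)).$$
   Context: Fix an integer $k\ge 2$, coordinates $s=(s_1,\dots,s_k)$ on $\mathbb{C}^k$, $s_0:=1$, $P_s(z):=\sum_{h=0}^k(-1)^hs_hz^{k-h}$. $A(s)$ is the $(k,k)$ companion matrix with $A_{i,i+1}=1$ for $i\in[1,k-1]$, last row $A_{k,j}=(-1)^{k-j}s_{k+1-j}$ for $j\in[1,k]$, all other entries $0$. $P'_s(A(s)):=\sum_{h=0}^{k-1}(-1)^h(k-h)s_hA(s)^{k-h-1}$. $\nabla$ is the constant $(k,k)$ matrix with $\nabla_{i+1,i}=i$ for $i\in[1,k-1]$ and all other entries $0$. *)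

theory Defs
  imports "HOL-Analysis.Analysis" "Jordan_Normal_Form.Matrix"
begin

(* Matrices are 0-indexed in Jordan_Normal_Form: entry (i,j) here is entry (i+1,j+1) of the paper.
   Coordinates s_1..s_k are s 1 .. s k of a function s :: nat => complex; s_0 := 1. *)

definition scoord :: "(nat \<Rightarrow> complex) \<Rightarrow> nat \<Rightarrow> complex" where
  "scoord s h = (if h = 0 then 1 else s h)"

definition companion :: "nat \<Rightarrow> (nat \<Rightarrow> complex) \<Rightarrow> complex mat" where
  "companion k s = mat k k (\<lambda>(i,j).
     if i = k - 1 then (-1) ^ (k - 1 - j) * s (k - j)
     else if j = i + 1 then 1 else 0)"

definition nabla :: "nat \<Rightarrow> complex mat" where
  "nabla k = mat k k (\<lambda>(i,j). if i = j + 1 then of_nat (j + 1) else 0)"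

definition Pderiv_at_A :: "nat \<Rightarrow> (nat \<Rightarrow> complex) \<Rightarrow> complex mat" where
  "Pderiv_at_A k s = mat k k (\<lambda>(i,j).
     \<Sum>h<k. (-1) ^ h * of_nat (k - h) * scoord s h * (companion k s ^\<^sub>m (k - h - 1)) $$ (i,j))"

definition dsk_pow :: "nat \<Rightarrow> nat \<Rightarrow> (nat \<Rightarrow> complex) \<Rightarrow> complex mat" where
  "dsk_pow k p s = mat k k (\<lambda>(i,j).
     deriv (\<lambda>t. (companion k (s(k := t)) ^\<^sub>m p) $$ (i,j)) (s k))"

end

theory Submission
  imports Defs
begin

text \<open>
  Write \<open>A = A(s)\<close>, \<open>N = \<nabla>\<close> and \<open>E = \<partial>A/\<partial>s\<^sub>k\<close>, whose only nonzero entry is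
  \<open>(-1)^(k-1)\<close> at \<open>(k,1)\<close>. Left multiplication by \<open>E\<close> moves the first row to the last one,
  so for \<open>p = 1\<close> the identity says that \<open>N A - A N + I\<close> vanishes outside its last row and that
  this row is the first row of \<open>P'\<^sub>s(A)\<close>; both are direct computations, using that the first
  row of \<open>A^m\<close> is \<open>e\<^sub>m\<^sub>+\<^sub>1\<close> for \<open>m < k\<close>. The general case follows by induction on \<open>p\<close>,
  since \<open>X \<mapsto> N X - X N\<close> is a derivation, \<open>\<partial>(A^(p+1)) = \<partial>(A^p) A + A^p E\<close> by the product
  rule, and \<open>P'\<^sub>s(A)\<close> commutes with \<open>A\<close>.
\<close>

lemma mult_pow_mat_commute:
  fixes A B :: "'a::semiring_1 mat"
  assumes A: "A \<in> carrier_mat n n" and B: "B \<in> carrier_mat n n" and AB: "A * B = B * A"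
  shows "A * B ^\<^sub>m m = B ^\<^sub>m m * A"
proof (induction m)
  case 0
  show ?case using A B by simp
next
  case (Suc m)
  have "A * B ^\<^sub>m Suc m = (A * B ^\<^sub>m m) * B"
    using assoc_mult_mat[OF A pow_carrier_mat[OF B] B] by simp
  also have "\<dots> = B ^\<^sub>m m * (A * B)"
    using assoc_mult_mat[OF pow_carrier_mat[OF B] A B] by (simp add: Suc)
  also have "\<dots> = B ^\<^sub>m Suc m * A"
    using assoc_mult_mat[OF pow_carrier_mat[OF B] B A] by (simp add: AB)
  finally show ?case .
qed

lemma mult_lincomb_mat_commute:
  fixes A :: "'a::comm_semiring_1 mat"
  assumes A: "A \<in> carrier_mat n n" and B: "\<And>h. h \<in> H \<Longrightarrow> B h \<in> carrier_mat n n"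
    and comm: "\<And>h. h \<in> H \<Longrightarrow> A * B h = B h * A"
  shows "A * mat n n (\<lambda>(i,j). \<Sum>h\<in>H. c h * B h $$ (i,j))
       = mat n n (\<lambda>(i,j). \<Sum>h\<in>H. c h * B h $$ (i,j)) * A"
    (is "A * ?M = ?M * A")
proof (rule eq_matI)
  fix i j assume "i < dim_row (?M * A)" "j < dim_col (?M * A)"
  then have i: "i < n" and j: "j < n" using A by auto
  have prod: "(X * Y) $$ (i,j) = (\<Sum>l<n. X $$ (i,l) * Y $$ (l,j))"
    if "X \<in> carrier_mat n n" "Y \<in> carrier_mat n n" for X Y :: "'a mat"
    using that i j by (simp add: scalar_prod_def atLeast0LessThan)
  have "(A * ?M) $$ (i,j) = (\<Sum>l<n. A $$ (i,l) * (\<Sum>h\<in>H. c h * B h $$ (l,j)))"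
    using A j by (auto simp: prod intro!: sum.cong)
  also have "\<dots> = (\<Sum>h\<in>H. c h * (\<Sum>l<n. A $$ (i,l) * B h $$ (l,j)))"
    by (simp add: sum_distrib_left mult_ac sum.swap[of _ H])
  also have "\<dots> = (\<Sum>h\<in>H. c h * (\<Sum>l<n. B h $$ (i,l) * A $$ (l,j)))"
    using A B by (intro sum.cong) (simp_all flip: prod add: comm)
  also have "\<dots> = (\<Sum>l<n. (\<Sum>h\<in>H. c h * B h $$ (i,l)) * A $$ (l,j))"
    by (simp add: sum_distrib_left sum_distrib_right mult_ac sum.swap[of _ H])
  also have "\<dots> = (?M * A) $$ (i,j)"
    using A i by (auto simp: prod intro!: sum.cong)
  finally show "(A * ?M) $$ (i,j) = (?M * A) $$ (i,j)" .
qed (use A in auto)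

text \<open>The derivative of \<open>X \<mapsto> X ^ p\<close> at \<open>A\<close> along \<open>E\<close>, that is
  \<open>\<Sum>i<p. A ^ i * E * A ^ (p - 1 - i)\<close>, in the recursive form given by the product rule.\<close>

fun pow_mat_deriv :: "nat \<Rightarrow> 'a::semiring_1 mat \<Rightarrow> 'a mat \<Rightarrow> nat \<Rightarrow> 'a mat" where
  "pow_mat_deriv n A E 0 = 0\<^sub>m n n"
| "pow_mat_deriv n A E (Suc p) = pow_mat_deriv n A E p * A + A ^\<^sub>m p * E"

lemma pow_mat_deriv_carrier [simp]:
  "A \<in> carrier_mat n n \<Longrightarrow> E \<in> carrier_mat n n \<Longrightarrow> pow_mat_deriv n A E p \<in> carrier_mat n n"
  by (induction p) auto

lemma has_field_derivative_index_mult_mat: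
  fixes M K :: "'a::real_normed_field \<Rightarrow> 'a mat"
  assumes M: "\<And>t. M t \<in> carrier_mat n m" and K: "\<And>t. K t \<in> carrier_mat m r"
    and M': "M' \<in> carrier_mat n m" and K': "K' \<in> carrier_mat m r"
    and i: "i < n" and j: "j < r"
    and dM: "\<And>l. l < m \<Longrightarrow> ((\<lambda>t. M t $$ (i,l)) has_field_derivative M' $$ (i,l)) (at x)"
    and dK: "\<And>l. l < m \<Longrightarrow> ((\<lambda>t. K t $$ (l,j)) has_field_derivative K' $$ (l,j)) (at x)"
  shows "((\<lambda>t. (M t * K t) $$ (i,j)) has_field_derivative (M' * K x + M x * K') $$ (i,j)) (at x)"
proof -
  have "((\<lambda>t. \<Sum>l<m. M t $$ (i,l) * K t $$ (l,j)) has_field_derivative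
          (\<Sum>l<m. M' $$ (i,l) * K x $$ (l,j) + M x $$ (i,l) * K' $$ (l,j))) (at x)"
  proof (rule DERIV_sum)
    fix l assume "l \<in> {..<m}"
    then show "((\<lambda>t. M t $$ (i,l) * K t $$ (l,j)) has_field_derivative
        M' $$ (i,l) * K x $$ (l,j) + M x $$ (i,l) * K' $$ (l,j)) (at x)"
      using DERIV_mult'[OF dM dK] by (simp add: add.commute)
  qed
  moreover have "(M t * K t) $$ (i,j) = (\<Sum>l<m. M t $$ (i,l) * K t $$ (l,j))" for t
    using M[of t] K[of t] i j by (simp add: scalar_prod_def atLeast0LessThan)
  moreover have "(M' * K x + M x * K') $$ (i,j)
      = (\<Sum>l<m. M' $$ (i,l) * K x $$ (l,j) + M x $$ (i,l) * K' $$ (l,j))"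
    using M[of x] K[of x] M' K' i j by (simp add: scalar_prod_def atLeast0LessThan sum.distrib)
  ultimately show ?thesis by simp
qed

lemma has_field_derivative_index_pow_mat:
  fixes M :: "'a::real_normed_field \<Rightarrow> 'a mat"
  assumes M: "\<And>t. M t \<in> carrier_mat n n" and E: "E \<in> carrier_mat n n"
    and dM: "\<And>i j. i < n \<Longrightarrow> j < n \<Longrightarrow> ((\<lambda>t. M t $$ (i,j)) has_field_derivative E $$ (i,j)) (at x)"
    and i: "i < n" and j: "j < n"
  shows "((\<lambda>t. (M t ^\<^sub>m p) $$ (i,j)) has_field_derivative pow_mat_deriv n (M x) E p $$ (i,j)) (at x)"
  using j
proof (induction p arbitrary: j)
  case 0
  have "(M t ^\<^sub>m 0) $$ (i,j) = 1\<^sub>m n $$ (i,j)" for t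
    using M[of t] by simp
  then show ?case using i \<open>j < n\<close> by simp
next
  case (Suc p)
  have "((\<lambda>t. (M t ^\<^sub>m p * M t) $$ (i,j)) has_field_derivative
          (pow_mat_deriv n (M x) E p * M x + M x ^\<^sub>m p * E) $$ (i,j)) (at x)"
    by (rule has_field_derivative_index_mult_mat[OF pow_carrier_mat[OF M] M
          pow_mat_deriv_carrier[OF M E] E i Suc.prems Suc.IH dM[OF _ Suc.prems]])
  then show ?case
    by simp
qed

lemma commutator_mult_mat:
  fixes N X Y :: "'a::comm_ring_1 mat"
  assumes N: "N \<in> carrier_mat n n" and X: "X \<in> carrier_mat n n" and Y: "Y \<in> carrier_mat n n"
  shows "N * (X * Y) - (X * Y) * N = (N * X - X * N) * Y + X * (N * Y - Y * N)"
proof -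
  have "(N * X - X * N) * Y = N * X * Y - X * N * Y"
    by (rule minus_mult_distrib_mat[OF mult_carrier_mat[OF N X] mult_carrier_mat[OF X N] Y])
  moreover have "X * (N * Y - Y * N) = X * (N * Y) - X * (Y * N)"
    by (rule mult_minus_distrib_mat[OF X mult_carrier_mat[OF N Y] mult_carrier_mat[OF Y N]])
  ultimately show ?thesis
    using N X Y by (intro eq_matI) (auto simp del: index_mult_mat(1))
qed

lemma commutator_pow_mat_Suc:
  fixes N A :: "'a::comm_ring_1 mat"
  assumes N: "N \<in> carrier_mat n n" and A: "A \<in> carrier_mat n n"
  shows "N * A ^\<^sub>m Suc (Suc p) - A ^\<^sub>m Suc (Suc p) * N + of_nat (Suc (Suc p)) \<cdot>\<^sub>m A ^\<^sub>m Suc p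
       = (N * A ^\<^sub>m Suc p - A ^\<^sub>m Suc p * N + of_nat (Suc p) \<cdot>\<^sub>m A ^\<^sub>m p) * A
         + A ^\<^sub>m Suc p * (N * A - A * N + 1\<^sub>m n)"
proof -
  let ?W = "A ^\<^sub>m Suc p" and ?c = "of_nat (Suc p) :: 'a"
  have W: "?W \<in> carrier_mat n n"
    by (rule pow_carrier_mat[OF A])
  have scalar: "of_nat (Suc (Suc p)) * w = ?c * w + w" for w :: 'a
    by (simp add: algebra_simps)
  have "(N * ?W - ?W * N + ?c \<cdot>\<^sub>m A ^\<^sub>m p) * A = (N * ?W - ?W * N) * A + (?c \<cdot>\<^sub>m A ^\<^sub>m p) * A"
    by (rule add_mult_distrib_mat[OF minus_carrier_mat[OF mult_carrier_mat[OF W N]]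
          smult_carrier_mat[OF pow_carrier_mat[OF A]] A])
  also have "(?c \<cdot>\<^sub>m A ^\<^sub>m p) * A = ?c \<cdot>\<^sub>m ?W"
    using mult_smult_assoc_mat[OF pow_carrier_mat[OF A] A] by simp
  finally have left: "(N * ?W - ?W * N + ?c \<cdot>\<^sub>m A ^\<^sub>m p) * A = (N * ?W - ?W * N) * A + ?c \<cdot>\<^sub>m ?W" .
  have right: "?W * (N * A - A * N + 1\<^sub>m n) = ?W * (N * A - A * N) + ?W"
    by (simp only: mult_add_distrib_mat[OF W minus_carrier_mat[OF mult_carrier_mat[OF A N]]
          one_carrier_mat] right_mult_one_mat[OF W])
  show ?thesis
    unfolding pow_mat.simps(2)[of A "Suc p"] commutator_mult_mat[OF N W A] left right
    using N A W by (intro eq_matI) (simp_all del: index_mult_mat(1) pow_mat.simps of_nat_Suc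
        add: scalar ac_simps)
qed

lemma commutator_pow_mat:
  fixes N A E Q :: "'a::comm_ring_1 mat"
  assumes N: "N \<in> carrier_mat n n" and A: "A \<in> carrier_mat n n"
    and E: "E \<in> carrier_mat n n" and Q: "Q \<in> carrier_mat n n"
    and AQ: "A * Q = Q * A" and base: "N * A - A * N + 1\<^sub>m n = E * Q"
  shows "N * A ^\<^sub>m Suc p - A ^\<^sub>m Suc p * N + of_nat (Suc p) \<cdot>\<^sub>m A ^\<^sub>m p
       = pow_mat_deriv n A E (Suc p) * Q"
proof (induction p)
  case 0
  have "of_nat 1 \<cdot>\<^sub>m 1\<^sub>m n = (1\<^sub>m n :: 'a mat)"
    by (intro eq_matI) auto
  then show ?case using N A E Q base by simp
next
  case (Suc p)
  let ?W = "A ^\<^sub>m Suc p" and ?D = "pow_mat_deriv n A E (Suc p)"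
  have W: "?W \<in> carrier_mat n n" and D: "?D \<in> carrier_mat n n"
    using A E by auto
  have "N * A ^\<^sub>m Suc (Suc p) - A ^\<^sub>m Suc (Suc p) * N + of_nat (Suc (Suc p)) \<cdot>\<^sub>m ?W
      = ?D * Q * A + ?W * (E * Q)"
    unfolding commutator_pow_mat_Suc[OF N A] Suc.IH base ..
  also have "\<dots> = ?D * A * Q + ?W * E * Q"
    using assoc_mult_mat[OF D Q A] assoc_mult_mat[OF D A Q] assoc_mult_mat[OF W E Q] by (simp add: AQ)
  also have "\<dots> = (?D * A + ?W * E) * Q"
    by (rule add_mult_distrib_mat[OF mult_carrier_mat[OF D A] mult_carrier_mat[OF W E] Q, symmetric])
  finally show ?case by simp
qed

definition companion_dsk :: "nat \<Rightarrow> complex mat" where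
  "companion_dsk k = mat k k (\<lambda>(i,j). if i = k - 1 \<and> j = 0 then (-1) ^ (k - 1) else 0)"

lemma companion_dim [simp]: "dim_row (companion k s) = k" "dim_col (companion k s) = k"
  by (simp_all add: companion_def)

lemma companion_carrier [simp]: "companion k s \<in> carrier_mat k k"
  by (simp add: carrier_matI)

lemma nabla_dim [simp]: "dim_row (nabla k) = k" "dim_col (nabla k) = k"
  by (simp_all add: nabla_def)

lemma nabla_carrier [simp]: "nabla k \<in> carrier_mat k k"
  by (simp add: carrier_matI)

lemma Pderiv_at_A_dim [simp]: "dim_row (Pderiv_at_A k s) = k" "dim_col (Pderiv_at_A k s) = k"
  by (simp_all add: Pderiv_at_A_def)

lemma Pderiv_at_A_carrier [simp]: "Pderiv_at_A k s \<in> carrier_mat k k"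
  by (simp add: carrier_matI)

lemma companion_dsk_dim [simp]: "dim_row (companion_dsk k) = k" "dim_col (companion_dsk k) = k"
  by (simp_all add: companion_dsk_def)

lemma companion_dsk_carrier [simp]: "companion_dsk k \<in> carrier_mat k k"
  by (simp add: carrier_matI)

lemma companion_pow_row0:
  assumes "m < k" and "j < k"
  shows "(companion k s ^\<^sub>m m) $$ (0,j) = (if j = m then 1 else 0)"
  using assms
proof (induction m arbitrary: j)
  case 0
  then show ?case by simp
next
  case (Suc m)
  have "(companion k s ^\<^sub>m Suc m) $$ (0,j) = (\<Sum>l<k. (companion k s ^\<^sub>m m) $$ (0,l) * companion k s $$ (l,j))"
    using Suc.prems by (simp add: scalar_prod_def atLeast0LessThan)
  also have "\<dots> = companion k s $$ (m,j)"
    using Suc by (simp add: if_distrib[of "\<lambda>x. x * _"] cong: if_cong)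
  also have "\<dots> = (if j = Suc m then 1 else 0)"
    using Suc.prems by (simp add: companion_def)
  finally show ?case .
qed

lemma Pderiv_at_A_row0:
  assumes "j < k"
  shows "Pderiv_at_A k s $$ (0,j) = (-1) ^ (k - 1 - j) * of_nat (j + 1) * scoord s (k - 1 - j)"
proof -
  have "Pderiv_at_A k s $$ (0,j)
      = (\<Sum>h<k. (-1) ^ h * of_nat (k - h) * scoord s h * (companion k s ^\<^sub>m (k - h - 1)) $$ (0,j))"
    using assms by (simp add: Pderiv_at_A_def)
  also have "\<dots> = (\<Sum>h<k. if h = k - 1 - j then (-1) ^ h * of_nat (k - h) * scoord s h else 0)"
    using assms by (intro sum.cong) (auto simp: companion_pow_row0)
  also have "\<dots> = (-1) ^ (k - 1 - j) * of_nat (k - (k - 1 - j)) * scoord s (k - 1 - j)"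
    using assms by (simp add: sum.delta)
  also have "k - (k - 1 - j) = j + 1"
    using assms by arith
  finally show ?thesis .
qed

lemma index_nabla_mult:
  assumes "X \<in> carrier_mat k k" and "i < k" and "j < k"
  shows "(nabla k * X) $$ (i,j) = (if i = 0 then 0 else of_nat i * X $$ (i - 1, j))"
proof -
  have "(nabla k * X) $$ (i,j) = (\<Sum>l<k. (if i = l + 1 then of_nat (l + 1) else 0) * X $$ (l,j))"
    using assms by (simp add: scalar_prod_def atLeast0LessThan nabla_def)
  also have "\<dots> = (\<Sum>l<k. if l = i - 1 \<and> i \<noteq> 0 then of_nat i * X $$ (l,j) else 0)"
    by (intro sum.cong) auto
  also have "\<dots> = (if i = 0 then 0 else of_nat i * X $$ (i - 1, j))"
    using assms by (simp add: sum.delta)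
  finally show ?thesis .
qed

lemma index_mult_nabla:
  assumes "X \<in> carrier_mat k k" and "i < k" and "j < k"
  shows "(X * nabla k) $$ (i,j) = (if j + 1 < k then of_nat (j + 1) * X $$ (i, j + 1) else 0)"
proof -
  have "(X * nabla k) $$ (i,j) = (\<Sum>l<k. X $$ (i,l) * (if l = j + 1 then of_nat (j + 1) else 0))"
    using assms by (simp add: scalar_prod_def atLeast0LessThan nabla_def)
  also have "\<dots> = (if j + 1 < k then of_nat (j + 1) * X $$ (i, j + 1) else 0)"
    by (simp add: if_distrib[of "\<lambda>x. _ * x"] mult.commute cong: if_cong)
  finally show ?thesis .
qed

lemma index_companion_dsk_mult:
  assumes "X \<in> carrier_mat k k" and "i < k" and "j < k"
  shows "(companion_dsk k * X) $$ (i,j) = (if i = k - 1 then (-1) ^ (k - 1) * X $$ (0,j) else 0)"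
proof -
  have "(companion_dsk k * X) $$ (i,j)
      = (\<Sum>l<k. (if i = k - 1 \<and> l = 0 then (-1) ^ (k - 1) else 0) * X $$ (l,j))"
    using assms by (simp add: scalar_prod_def atLeast0LessThan companion_dsk_def)
  also have "\<dots> = (if i = k - 1 then (-1) ^ (k - 1) * X $$ (0,j) else 0)"
    using assms by (auto simp: if_distrib[of "\<lambda>x. x * _"] cong: if_cong)
  finally show ?thesis .
qed

lemma index_commutator_nabla_companion_upper:
  assumes "i < k - 1" and "j < k"
  shows "(nabla k * companion k s - companion k s * nabla k + 1\<^sub>m k) $$ (i,j) = 0"
proof (cases "i = j")
  case True
  then have "j + 1 < k"
    using assms by linarith
  moreover have "companion k s $$ (i - 1, i) = 1" if "i \<noteq> 0"
    using assms that by (simp add: companion_def)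
  moreover have "companion k s $$ (i, i + 1) = 1"
    using assms by (simp add: companion_def)
  ultimately show ?thesis
    using assms True by (simp add: index_nabla_mult index_mult_nabla del: index_mult_mat(1))
next
  case False
  have "companion k s $$ (i - 1, j) = 0" if "i \<noteq> 0"
    using assms False that by (simp add: companion_def)
  moreover have "companion k s $$ (i, j + 1) = 0" if "j + 1 < k"
    using assms False that by (simp add: companion_def)
  ultimately show ?thesis
    using assms False by (simp add: index_nabla_mult index_mult_nabla del: index_mult_mat(1))
qed

lemma index_commutator_nabla_companion_last:
  assumes "k \<ge> 2" and "j < k"
  shows "(nabla k * companion k s - companion k s * nabla k + 1\<^sub>m k) $$ (k - 1, j)
       = Pderiv_at_A k s $$ (0,j)"
proof (cases "j = k - 1")
  case True
  moreover have "companion k s $$ (k - 2, k - 1) = 1"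
    using assms by (simp add: companion_def)
  ultimately show ?thesis
    using assms by (simp add: index_nabla_mult index_mult_nabla Pderiv_at_A_row0 scoord_def
        of_nat_diff numeral_2_eq_2 del: index_mult_mat(1))
next
  case False
  have "k - Suc j = Suc (k - Suc (Suc j))"
    using assms False by arith
  then have sign: "(- 1 :: complex) ^ (k - Suc j) = - ((- 1) ^ (k - Suc (Suc j)))"
    by simp
  have ij: "k - 1 \<noteq> 0" "k - 1 \<noteq> j" "j + 1 < k" "k - 2 \<noteq> k - 1" "j \<noteq> k - 2 + 1" "k - 1 - j \<noteq> 0"
    using assms False by linarith+
  have "companion k s $$ (k - 2, j) = 0"
    using ij assms by (simp add: companion_def)
  moreover have "companion k s $$ (k - 1, j + 1) = (-1) ^ (k - 2 - j) * s (k - 1 - j)"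
    using ij by (simp add: companion_def)
  ultimately show ?thesis
    using assms ij by (simp add: index_nabla_mult index_mult_nabla Pderiv_at_A_row0 scoord_def sign
        numeral_2_eq_2 del: index_mult_mat(1))
qed

lemma commutator_nabla_companion:
  assumes "k \<ge> 2"
  shows "nabla k * companion k s - companion k s * nabla k + 1\<^sub>m k
       = companion_dsk k * ((-1) ^ (k - 1) \<cdot>\<^sub>m Pderiv_at_A k s)"
proof (rule eq_matI)
  fix i j assume "i < dim_row (companion_dsk k * ((-1) ^ (k - 1) \<cdot>\<^sub>m Pderiv_at_A k s))"
    and "j < dim_col (companion_dsk k * ((-1) ^ (k - 1) \<cdot>\<^sub>m Pderiv_at_A k s))"
  then have i: "i < k" and j: "j < k"
    by simp_all
  have rhs: "(companion_dsk k * ((-1) ^ (k - 1) \<cdot>\<^sub>m Pderiv_at_A k s)) $$ (i,j)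
      = (if i = k - 1 then Pderiv_at_A k s $$ (0,j) else 0)"
    using i j by (simp add: index_companion_dsk_mult del: index_mult_mat(1) flip: power_add)
  consider "i < k - 1" | "i = k - 1"
    using i by linarith
  then show "(nabla k * companion k s - companion k s * nabla k + 1\<^sub>m k) $$ (i,j)
      = (companion_dsk k * ((-1) ^ (k - 1) \<cdot>\<^sub>m Pderiv_at_A k s)) $$ (i,j)"
  proof cases
    case 1
    then show ?thesis
      unfolding rhs using index_commutator_nabla_companion_upper[OF 1 j] by simp
  next
    case 2
    then show ?thesis
      unfolding rhs using index_commutator_nabla_companion_last[OF assms j] by simp
  qed
qed simp_all

lemma companion_commute_Pderiv_at_A:
  "companion k s * Pderiv_at_A k s = Pderiv_at_A k s * companion k s"
  unfolding Pderiv_at_A_def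
  using mult_pow_mat_commute[OF companion_carrier companion_carrier refl]
  by (intro mult_lincomb_mat_commute) auto

lemma has_field_derivative_index_companion:
  assumes l: "l < k" and j: "j < k"
  shows "((\<lambda>t. companion k (s(k := t)) $$ (l,j)) has_field_derivative companion_dsk k $$ (l,j)) (at x)"
proof (cases "l = k - 1 \<and> j = 0")
  case True
  then have "companion k (s(k := t)) $$ (l,j) = (-1) ^ (k - 1) * t" for t
    using l by (simp add: companion_def)
  moreover have "((\<lambda>t. (-1) ^ (k - 1) * t) has_field_derivative (-1) ^ (k - 1) * 1) (at x)"
    by (intro DERIV_cmult DERIV_ident)
  ultimately show ?thesis
    using True l by (simp add: companion_dsk_def)
next
  case False
  then have "l = k - 1 \<Longrightarrow> k - j \<noteq> k"
    using j by auto
  then have "companion k (s(k := t)) $$ (l,j) = companion k s $$ (l,j)" for t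
    using l j by (simp add: companion_def)
  moreover have "companion_dsk k $$ (l,j) = 0"
    using False l j by (simp add: companion_dsk_def)
  ultimately show ?thesis
    by simp
qed

lemma dsk_pow_eq_pow_mat_deriv:
  "dsk_pow k p s = pow_mat_deriv k (companion k s) (companion_dsk k) p"
proof -
  have D: "pow_mat_deriv k (companion k s) (companion_dsk k) p \<in> carrier_mat k k"
    by simp
  show ?thesis
  proof (rule eq_matI)
    fix i j assume "i < dim_row (pow_mat_deriv k (companion k s) (companion_dsk k) p)"
      and "j < dim_col (pow_mat_deriv k (companion k s) (companion_dsk k) p)"
    then have i: "i < k" and j: "j < k"
      using carrier_matD[OF D] by simp_all
    have "((\<lambda>t. (companion k (s(k := t)) ^\<^sub>m p) $$ (i,j)) has_field_derivative
            pow_mat_deriv k (companion k (s(k := s k))) (companion_dsk k) p $$ (i,j)) (at (s k))"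
      by (rule has_field_derivative_index_pow_mat[OF companion_carrier companion_dsk_carrier
            has_field_derivative_index_companion i j])
    then show "dsk_pow k p s $$ (i,j) = pow_mat_deriv k (companion k s) (companion_dsk k) p $$ (i,j)"
      using i j by (simp add: dsk_pow_def DERIV_imp_deriv)
  qed (use carrier_matD[OF D] in \<open>simp_all add: dsk_pow_def\<close>)
qed

theorem mainTheorem9:
  fixes k p :: nat and s :: "nat \<Rightarrow> complex"
  assumes "k \<ge> 2" and "p \<ge> 1"
  shows "nabla k * companion k s ^\<^sub>m p - companion k s ^\<^sub>m p * nabla k
           + of_nat p \<cdot>\<^sub>m companion k s ^\<^sub>m (p - 1)
         = (-1) ^ (k - 1) \<cdot>\<^sub>m (dsk_pow k p s * Pderiv_at_A k s)"
proof -
  let ?A = "companion k s" and ?Q = "(-1) ^ (k - 1) \<cdot>\<^sub>m Pderiv_at_A k s"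
  obtain q where p: "p = Suc q" using assms(2) by (cases p) auto
  have AQ: "?A * ?Q = ?Q * ?A"
    by (simp add: mult_smult_distrib[OF companion_carrier Pderiv_at_A_carrier]
        mult_smult_assoc_mat[OF Pderiv_at_A_carrier companion_carrier]
        companion_commute_Pderiv_at_A)
  have "nabla k * ?A ^\<^sub>m p - ?A ^\<^sub>m p * nabla k + of_nat p \<cdot>\<^sub>m ?A ^\<^sub>m (p - 1)
      = pow_mat_deriv k ?A (companion_dsk k) p * ?Q"
    unfolding p diff_Suc_1
    by (rule commutator_pow_mat[OF nabla_carrier companion_carrier companion_dsk_carrier
          smult_carrier_mat[OF Pderiv_at_A_carrier] AQ commutator_nabla_companion[OF assms(1)]])
  also have "\<dots> = (-1) ^ (k - 1) \<cdot>\<^sub>m (dsk_pow k p s * Pderiv_at_A k s)"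
    by (simp add: dsk_pow_eq_pow_mat_deriv mult_smult_distrib[OF
          pow_mat_deriv_carrier[OF companion_carrier companion_dsk_carrier] Pderiv_at_A_carrier])
  finally show ?thesis .
qed

end
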